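(* Let $f$ be a real-analytic function of one real variable that is not identically zero. Consider on $\mathbb R^2$ the system $\ddot x_1=\dot x_1^2\,f(\dot x_2/\dot x_1)$, $\ddot x_2=\dot x_1\dot x_2\,f(\dot x_2/\dot x_1)$, i.e. the spray with $f^1=y_1^2f(y_2/y_1)$, $f^2=y_1y_2f(y_2/y_1)$ on the region $y_1\neq0$. Then this system is not the geodesic system of any non-Berwald Landsberg metric: there is no open set $U$ (in the domain of the spray) on which the Berwald curvature $\mathcal R$ is not identically zero and a function $E:U\to\mathbb R$ satisfying (H), (EL), (Ls) with $(g_{ij})$ positive definite.
   Context: Coordinates $(x^1,x^2,y^1,y^2)=(x_1,x_2,y_1,y_2)$ on $T\mathbb R^2$. For the spray $S=y^i\frac{\partial}{\partial x^i}+f^i\frac{\partial}{\partial y^i}$: $\Gamma^i_j=-\frac12\frac{\partial f^i}{\partial y^j}$, $\Gamma^i_{jk}=\frac{\partial\Gamma^i_j}{\partial y^k}$; Berwald curvature $\mathcal R=-\frac12\frac{\partial^3f^l}{\partial y^i\partial y^j\partial y^k}dx^i\otimes dx^j\otimes dx^k\otimes\frac{\partial}{\partial y^l}$ (a Landsberg metric is of Berwald type iff $\mathcal R=0$). For $E$ smooth, $g_{ij}=\frac{\partial^2E}{\partial y^i\partial y^j}$; (H) $y^i\frac{\partial E}{\partial y^i}-2E=0$; (EL) $y^j\frac{\partial^2E}{\partial x^j\partial y^i}+f^j\frac{\partial^2E}{\partial y^j\partial y^i}-\frac{\partial E}{\partial x^i}=0$; (Ls) $\frac{\partial g_{jk}}{\partial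 x^i}-\Gamma^l_i\frac{\partial g_{jk}}{\partial y^l}-\Gamma^l_{ik}g_{lj}-\Gamma^l_{ij}g_{lk}=0$. *)

theory Defs
  imports "HOL-Analysis.Analysis"
begin

definition real_analytic :: "(real \<Rightarrow> real) \<Rightarrow> bool" where
  "real_analytic f \<longleftrightarrow> (\<forall>x0. \<exists>r>0. \<exists>a::nat \<Rightarrow> real.
      \<forall>x. \<bar>x - x0\<bar> < r \<longrightarrow> (\<lambda>n. a n * (x - x0) ^ n) sums f x)"

text \<open>Points of T R^2 are (x1, x2, y1, y2); coordinate index 0,1,2,3 respectively.\<close>
type_synonym pt = "real \<times> real \<times> real \<times> real"

fun coord :: "nat \<Rightarrow> pt \<Rightarrow> real" where
  "coord k (a, b, c, d) = (if k = 0 then a else if k = 1 then b else if k = 2 then c else d)"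

fun upd :: "nat \<Rightarrow> real \<Rightarrow> pt \<Rightarrow> pt" where
  "upd k t (a, b, c, d) =
     (if k = 0 then (t, b, c, d) else if k = 1 then (a, t, c, d)
      else if k = 2 then (a, b, t, d) else (a, b, c, t))"

definition pd :: "nat \<Rightarrow> (pt \<Rightarrow> real) \<Rightarrow> pt \<Rightarrow> real" where
  "pd k F p = deriv (\<lambda>t. F (upd k t p)) (coord k p)"

fun pdl :: "nat list \<Rightarrow> (pt \<Rightarrow> real) \<Rightarrow> pt \<Rightarrow> real" where
  "pdl [] F = F"
| "pdl (k # ks) F = pd k (pdl ks F)"

definition smooth_on :: "pt set \<Rightarrow> (pt \<Rightarrow> real) \<Rightarrow> bool" where
  "smooth_on U F \<longleftrightarrow> (\<forall>ks. set ks \<subseteq> {..<4} \<longrightarrow>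
      continuous_on U (pdl ks F) \<and>
      (\<forall>k<4. \<forall>p\<in>U. ((\<lambda>t. pdl ks F (upd k t p)) has_real_derivative pdl (k # ks) F p)
                         (at (coord k p))))"

definition dX :: "nat \<Rightarrow> (pt \<Rightarrow> real) \<Rightarrow> pt \<Rightarrow> real" where
  "dX i F = pd (i - 1) F"
definition dY :: "nat \<Rightarrow> (pt \<Rightarrow> real) \<Rightarrow> pt \<Rightarrow> real" where
  "dY i F = pd (i + 1) F"

definition ycoord :: "nat \<Rightarrow> pt \<Rightarrow> real" where
  "ycoord i p = coord (i + 1) p"

definition Idx :: "nat set" where "Idx = {1, 2}"

definition spray_f :: "(real \<Rightarrow> real) \<Rightarrow> nat \<Rightarrow> pt \<Rightarrow> real" where
  "spray_f f l p = (let y1 = ycoord 1 p; y2 = ycoord 2 p in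
      if l = 1 then y1\<^sup>2 * f (y2 / y1) else y1 * y2 * f (y2 / y1))"

definition spray_domain :: "pt set" where
  "spray_domain = {p. ycoord 1 p \<noteq> 0}"

definition Gam1 :: "(real \<Rightarrow> real) \<Rightarrow> nat \<Rightarrow> nat \<Rightarrow> pt \<Rightarrow> real" where
  "Gam1 f i j p = - (1/2) * dY j (spray_f f i) p"

definition Gam2 :: "(real \<Rightarrow> real) \<Rightarrow> nat \<Rightarrow> nat \<Rightarrow> nat \<Rightarrow> pt \<Rightarrow> real" where
  "Gam2 f i j k p = dY k (Gam1 f i j) p"

definition berwald :: "(real \<Rightarrow> real) \<Rightarrow> nat \<Rightarrow> nat \<Rightarrow> nat \<Rightarrow> nat \<Rightarrow> pt \<Rightarrow> real" where
  "berwald f l i j k p = - (1/2) * dY i (dY j (dY k (spray_f f l))) p"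

definition gmet :: "(pt \<Rightarrow> real) \<Rightarrow> nat \<Rightarrow> nat \<Rightarrow> pt \<Rightarrow> real" where
  "gmet E i j = dY i (dY j E)"

definition cond_H :: "(pt \<Rightarrow> real) \<Rightarrow> pt \<Rightarrow> bool" where
  "cond_H E p \<longleftrightarrow> (\<Sum>i\<in>Idx. ycoord i p * dY i E p) - 2 * E p = 0"

definition cond_EL :: "(real \<Rightarrow> real) \<Rightarrow> (pt \<Rightarrow> real) \<Rightarrow> pt \<Rightarrow> bool" where
  "cond_EL f E p \<longleftrightarrow> (\<forall>i\<in>Idx.
      (\<Sum>j\<in>Idx. ycoord j p * dX j (dY i E) p) + (\<Sum>j\<in>Idx. spray_f f j p * dY j (dY i E) p)
      - dX i E p = 0)"

definition cond_Ls :: "(real \<Rightarrow> real) \<Rightarrow> (pt \<Rightarrow> real) \<Rightarrow> pt \<Rightarrow> bool" where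
  "cond_Ls f E p \<longleftrightarrow> (\<forall>i\<in>Idx. \<forall>j\<in>Idx. \<forall>k\<in>Idx.
      dX i (gmet E j k) p - (\<Sum>l\<in>Idx. Gam1 f l i p * dY l (gmet E j k) p)
      - (\<Sum>l\<in>Idx. Gam2 f l i k p * gmet E l j p)
      - (\<Sum>l\<in>Idx. Gam2 f l i j p * gmet E l k p) = 0)"

definition pos_def_at :: "(pt \<Rightarrow> real) \<Rightarrow> pt \<Rightarrow> bool" where
  "pos_def_at E p \<longleftrightarrow> (\<forall>v :: nat \<Rightarrow> real. (\<exists>i\<in>Idx. v i \<noteq> 0) \<longrightarrow>
      (\<Sum>i\<in>Idx. \<Sum>j\<in>Idx. gmet E i j p * v i * v j) > 0)"

end

theory Submission
  imports Defs
begin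

text \<open>
  The spray is \<open>f\<^sup>l = y\<^sup>l P\<close> with projective factor \<open>P = y\<^sub>1 f(y\<^sub>2/y\<^sub>1)\<close>, so its Berwald
  curvature is built from the second and third \<open>y\<close>-derivatives of \<open>P\<close> and vanishes wherever
  \<open>f''\<close> and \<open>f'''\<close> vanish at \<open>y\<^sub>2/y\<^sub>1\<close>.

  Homogeneity and the Euler-Lagrange equations
  give \<open>E\<^sub>x\<^sub>a = -(P\<^sub>a E + P E\<^sub>y\<^sub>a / 2)\<close>, and with this the Landsberg equation for
  \<open>(i, j, k) = (2, 2, 2)\<close> becomes \<open>2 E P\<^sub>2\<^sub>2\<^sub>2 + 3 E\<^sub>y\<^sub>2 P\<^sub>2\<^sub>2 = 0\<close>. Where \<open>P\<^sub>2\<^sub>2 \<noteq> 0\<close>,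
  differentiating this identity in \<open>x\<close> yields \<open>P E\<^sub>y\<^sub>2 = 2 E P\<^sub>2\<close>, and differentiating that once
  more in \<open>y\<^sup>2\<close> gives \<open>P\<^sub>2\<^sub>2 E\<^sup>2 = 0\<close>, contradicting \<open>E > 0\<close>. Hence \<open>P\<^sub>2\<^sub>2 = 0\<close>, then
  \<open>P\<^sub>2\<^sub>2\<^sub>2 = 0\<close>, i.e. \<open>f'' = f''' = 0\<close> along the slopes, and the Berwald curvature vanishes.
\<close>

section \<open>Real-analytic functions\<close>

lemma real_analytic_local_deriv:
  assumes "real_analytic f"
  obtains r a where "r > 0"
    and "\<And>x. \<bar>x - c\<bar> < r \<Longrightarrow> (f has_real_derivative deriv f x) (at x)"
    and "\<And>x. \<bar>x - c\<bar> < r \<Longrightarrow> (\<lambda>n. diffs a n * (x - c) ^ n) sums deriv f x"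
proof -
  obtain r a where r: "r > 0"
    and series: "\<And>x. \<bar>x - c\<bar> < r \<Longrightarrow> (\<lambda>n. a n * (x - c) ^ n) sums f x"
    using assms unfolding real_analytic_def by blast
  have summable: "summable (\<lambda>n. a n * z ^ n)" if "norm z < r" for z :: real
    using series[of "z + c"] that by (auto simp: sums_iff)
  have deriv_series: "(f has_real_derivative (\<Sum>n. diffs a n * (x - c) ^ n)) (at x)"
    if x: "\<bar>x - c\<bar> < r" for x
  proof -
    have d: "((\<lambda>z. \<Sum>n. a n * z ^ n) has_real_derivative (\<Sum>n. diffs a n * (x - c) ^ n)) (at (x - c))"
      by (rule termdiffs_strong'[of r]) (use summable x in auto)
    have "((\<lambda>y. \<Sum>n. a n * (y - c) ^ n) has_real_derivative (\<Sum>n. diffs a n * (x - c) ^ n)) (at x)"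
      using DERIV_chain2[where f="\<lambda>z. \<Sum>n. a n * z ^ n" and g="\<lambda>y. y - c", OF d, of 1 UNIV]
      by (simp add: DERIV_diff[OF DERIV_ident DERIV_const, simplified])
    then show ?thesis
    proof (rule has_field_derivative_transform_within_open)
      show "open {y. \<bar>y - c\<bar> < r}"
        by (intro open_Collect_less continuous_intros)
      show "x \<in> {y. \<bar>y - c\<bar> < r}"
        using x by simp
      fix y assume "y \<in> {y. \<bar>y - c\<bar> < r}"
      then have "(\<lambda>n. a n * (y - c) ^ n) sums f y"
        using series by simp
      then show "(\<Sum>n. a n * (y - c) ^ n) = f y"
        by (rule sums_unique[symmetric])
    qed
  qed
  show thesis
  proof
    fix x assume x: "\<bar>x - c\<bar> < r"
    have deriv_eq: "deriv f x = (\<Sum>n. diffs a n * (x - c) ^ n)"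
      using x by (intro DERIV_imp_deriv deriv_series)
    then show "(f has_real_derivative deriv f x) (at x)"
      using deriv_series[OF x] by simp
    have "summable (\<lambda>n. diffs a n * (x - c) ^ n)"
      by (rule termdiff_converges[of _ r]) (use summable x in auto)
    then show "(\<lambda>n. diffs a n * (x - c) ^ n) sums deriv f x"
      unfolding deriv_eq by (rule summable_sums)
  qed (fact r)
qed

lemma real_analytic_has_real_derivative:
  assumes "real_analytic f"
  shows "(f has_real_derivative deriv f x) (at x)"
proof -
  obtain r where "r > 0" and "\<And>y. \<bar>y - x\<bar> < r \<Longrightarrow> (f has_real_derivative deriv f y) (at y)"
    using real_analytic_local_deriv[OF assms, where c = x] by blast
  then show ?thesis
    by simp
qed

lemma real_analytic_deriv:
  assumes "real_analytic f"
  shows "real_analytic (deriv f)"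
  unfolding real_analytic_def
proof
  fix x0
  obtain r a where "r > 0" and "\<And>x. \<bar>x - x0\<bar> < r \<Longrightarrow> (\<lambda>n. diffs a n * (x - x0) ^ n) sums deriv f x"
    using real_analytic_local_deriv[OF assms, where c = x0] by blast
  then show "\<exists>r>0. \<exists>a. \<forall>x. \<bar>x - x0\<bar> < r \<longrightarrow> (\<lambda>n. a n * (x - x0) ^ n) sums deriv f x"
    by blast
qed

section \<open>Coordinates and partial derivatives on the tangent bundle\<close>

lemma coord_upd: "j < 4 \<Longrightarrow> k < 4 \<Longrightarrow> coord j (upd k t p) = (if j = k then t else coord j p)"
  by (cases p) (auto simp: less_Suc_eq numeral_eq_Suc)

lemma coord_upd_same [simp]: "coord k (upd k t p) = t"
  by (cases p) auto

lemma upd_coord [simp]: "upd k (coord k p) p = p"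
  by (cases p) auto

lemma upd_upd [simp]: "upd k s (upd k t p) = upd k s p"
  by (cases p) auto

lemma upd_commute: "j < 4 \<Longrightarrow> k < 4 \<Longrightarrow> j \<noteq> k \<Longrightarrow> upd j s (upd k t p) = upd k t (upd j s p)"
  by (cases p) (auto simp: less_Suc_eq numeral_eq_Suc)

lemma dist_upd: "dist (upd k t p) p = \<bar>t - coord k p\<bar>"
  by (cases p) (auto simp: dist_Pair_Pair dist_real_def)

lemma eventually_upd_in_open:
  assumes "open S" "p \<in> S"
  shows "eventually (\<lambda>t. upd k t p \<in> S) (nhds (coord k p))"
proof -
  obtain e where "e > 0" "ball p e \<subseteq> S"
    using assms open_contains_ball by blast
  show ?thesis
    unfolding eventually_nhds_metric
  proof (intro exI[of _ e] conjI allI impI)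
    fix t assume "dist t (coord k p) < e"
    then have "upd k t p \<in> ball p e"
      using dist_upd[of k t p] by (simp add: dist_commute dist_real_def)
    then show "upd k t p \<in> S"
      using \<open>ball p e \<subseteq> S\<close> by blast
  qed fact
qed

definition has_pd :: "nat \<Rightarrow> (pt \<Rightarrow> real) \<Rightarrow> pt \<Rightarrow> real \<Rightarrow> bool" where
  "has_pd k F p D \<longleftrightarrow> ((\<lambda>t. F (upd k t p)) has_real_derivative D) (at (coord k p))"

lemma has_pd_imp_pd: "has_pd k F p D \<Longrightarrow> pd k F p = D"
  unfolding has_pd_def pd_def by (rule DERIV_imp_deriv)

lemma has_pd_const: "D = 0 \<Longrightarrow> has_pd k (\<lambda>q. c) p D"
  unfolding has_pd_def by simp

lemma has_pd_coord: "j < 4 \<Longrightarrow> k < 4 \<Longrightarrow> D = (if j = k then 1 else 0) \<Longrightarrow> has_pd k (coord j) p D"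
  unfolding has_pd_def by (auto simp: coord_upd)

lemma has_pd_add: "has_pd k F p a \<Longrightarrow> has_pd k G p b \<Longrightarrow> D = a + b \<Longrightarrow> has_pd k (\<lambda>q. F q + G q) p D"
  unfolding has_pd_def using DERIV_add by blast

lemma has_pd_diff: "has_pd k F p a \<Longrightarrow> has_pd k G p b \<Longrightarrow> D = a - b \<Longrightarrow> has_pd k (\<lambda>q. F q - G q) p D"
  unfolding has_pd_def using DERIV_diff by blast

lemma has_pd_minus: "has_pd k F p a \<Longrightarrow> D = - a \<Longrightarrow> has_pd k (\<lambda>q. - F q) p D"
  unfolding has_pd_def using DERIV_minus by blast

lemma has_pd_mult:
  "has_pd k F p a \<Longrightarrow> has_pd k G p b \<Longrightarrow> D = F p * b + a * G p \<Longrightarrow> has_pd k (\<lambda>q. F q * G q) p D"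
  unfolding has_pd_def by (drule (1) DERIV_mult) (simp add: algebra_simps)

lemma has_pd_divide_const: "has_pd k F p a \<Longrightarrow> D = a / c \<Longrightarrow> has_pd k (\<lambda>q. F q / c) p D"
  unfolding has_pd_def using DERIV_cdivide by blast

lemmas has_pd_intros =
  has_pd_const has_pd_add has_pd_diff has_pd_minus has_pd_mult has_pd_divide_const

lemma pd_cong_open:
  assumes "open S" "p \<in> S" "\<And>q. q \<in> S \<Longrightarrow> F q = G q"
  shows "pd k F p = pd k G p"
  unfolding pd_def
  by (rule deriv_cong_ev[OF eventually_mono[OF eventually_upd_in_open[OF assms(1,2)]]])
     (use assms in auto)

lemma has_pd_cong_open:
  assumes "open S" "p \<in> S" "\<And>q. q \<in> S \<Longrightarrow> F q = G q" "has_pd k G p D"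
  shows "has_pd k F p D"
proof -
  have ev: "eventually (\<lambda>t. G (upd k t p) = F (upd k t p)) (nhds (coord k p))"
    by (rule eventually_mono[OF eventually_upd_in_open[OF assms(1,2)]]) (use assms(3) in auto)
  show ?thesis
    using assms(4) DERIV_cong_ev[OF refl ev refl] unfolding has_pd_def by blast
qed

lemma has_pd_vanishing_on_open:
  assumes "open S" "p \<in> S" "\<And>q. q \<in> S \<Longrightarrow> F q = 0" "has_pd k F p D"
  shows "D = 0"
proof -
  have "has_pd k (\<lambda>q. 0) p D"
    by (rule has_pd_cong_open[OF assms(1,2) _ assms(4)]) (use assms(3) in auto)
  then show ?thesis
    using has_pd_const[of 0 k 0 p] DERIV_unique unfolding has_pd_def by blast
qed

section \<open>Symmetry of mixed partial derivatives\<close>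

definition offset2 :: "nat \<Rightarrow> nat \<Rightarrow> real \<Rightarrow> real \<Rightarrow> pt \<Rightarrow> pt" where
  "offset2 i j s t p = upd i (coord i p + s) (upd j (coord j p + t) p)"

definition mixed_diff :: "nat \<Rightarrow> nat \<Rightarrow> (pt \<Rightarrow> real) \<Rightarrow> pt \<Rightarrow> real \<Rightarrow> real" where
  "mixed_diff i j G p h =
     G (offset2 i j h h p) - G (offset2 i j h 0 p) - G (offset2 i j 0 h p) + G (offset2 i j 0 0 p)"

lemma offset2_swap:
  "i < 4 \<Longrightarrow> j < 4 \<Longrightarrow> i \<noteq> j \<Longrightarrow> offset2 i j s t p = upd j (coord j p + t) (upd i (coord i p + s) p)"
  unfolding offset2_def by (simp add: coord_upd upd_commute)

lemma offset2_commute: "i < 4 \<Longrightarrow> j < 4 \<Longrightarrow> i \<noteq> j \<Longrightarrow> offset2 j i t s p = offset2 i j s t p"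
  unfolding offset2_def by (simp add: coord_upd upd_commute)

lemma dist_offset2:
  assumes "i < 4" "j < 4" "i \<noteq> j"
  shows "dist (offset2 i j s t p) p \<le> \<bar>s\<bar> + \<bar>t\<bar>"
proof -
  have "dist (offset2 i j s t p) p \<le> dist (offset2 i j s t p) (upd j (coord j p + t) p) + dist (upd j (coord j p + t) p) p"
    by (rule dist_triangle)
  also have "\<dots> = \<bar>s\<bar> + \<bar>t\<bar>"
    unfolding offset2_def dist_upd using assms by (simp add: coord_upd)
  finally show ?thesis .
qed

lemma mixed_diff_commute: "i < 4 \<Longrightarrow> j < 4 \<Longrightarrow> i \<noteq> j \<Longrightarrow> mixed_diff j i G p h = mixed_diff i j G p h"
  unfolding mixed_diff_def by (simp add: offset2_commute)

lemma has_pd_along_line: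
  assumes "has_pd i G (upd i (c + s) r) D"
  shows "((\<lambda>s. G (upd i (c + s) r)) has_real_derivative D) (at s)"
proof -
  have "((\<lambda>t. G (upd i t r)) has_real_derivative D) (at (s + c))"
    using assms unfolding has_pd_def by (simp add: add.commute)
  then show ?thesis
    using DERIV_shift[of "\<lambda>t. G (upd i t r)" D s c] by (simp add: add.commute)
qed

lemma mixed_diff_mvt:
  assumes ij: "i < 4" "j < 4" "i \<noteq> j" and h: "h > 0"
    and Gi: "\<forall>q\<in>U. has_pd i G q (Gi q)" and Gij: "\<forall>q\<in>U. has_pd j Gi q (Gij q)"
    and square: "\<And>s t. 0 \<le> s \<Longrightarrow> s \<le> h \<Longrightarrow> 0 \<le> t \<Longrightarrow> t \<le> h \<Longrightarrow> offset2 i j s t p \<in> U"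
  obtains \<xi> \<eta> where "0 < \<xi>" "\<xi> < h" "0 < \<eta>" "\<eta> < h"
    "mixed_diff i j G p h = h * h * Gij (offset2 i j \<xi> \<eta> p)"
proof -
  have "\<exists>\<xi>>0. \<xi> < h \<and> (G (offset2 i j h h p) - G (offset2 i j h 0 p)) - (G (offset2 i j 0 h p) - G (offset2 i j 0 0 p))
      = (h - 0) * (Gi (offset2 i j \<xi> h p) - Gi (offset2 i j \<xi> 0 p))"
  proof (rule MVT2[OF h, of "\<lambda>s. G (offset2 i j s h p) - G (offset2 i j s 0 p)"])
    fix s assume "0 \<le> s" "s \<le> h"
    then have "offset2 i j s h p \<in> U" "offset2 i j s 0 p \<in> U"
      using square h by auto
    then show "((\<lambda>s. G (offset2 i j s h p) - G (offset2 i j s 0 p)) has_real_derivative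
        Gi (offset2 i j s h p) - Gi (offset2 i j s 0 p)) (at s)"
      using Gi unfolding offset2_def by (intro DERIV_diff has_pd_along_line) auto
  qed
  then obtain \<xi> where \<xi>: "0 < \<xi>" "\<xi> < h"
    and mvt1: "mixed_diff i j G p h = h * (Gi (offset2 i j \<xi> h p) - Gi (offset2 i j \<xi> 0 p))"
    unfolding mixed_diff_def by (auto simp: algebra_simps)
  have "\<exists>\<eta>>0. \<eta> < h \<and> Gi (offset2 i j \<xi> h p) - Gi (offset2 i j \<xi> 0 p) = (h - 0) * Gij (offset2 i j \<xi> \<eta> p)"
  proof (rule MVT2[OF h, of "\<lambda>t. Gi (offset2 i j \<xi> t p)"])
    fix t assume "0 \<le> t" "t \<le> h"
    then have "offset2 i j \<xi> t p \<in> U"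
      using square \<xi> by auto
    then show "((\<lambda>t. Gi (offset2 i j \<xi> t p)) has_real_derivative Gij (offset2 i j \<xi> t p)) (at t)"
      using Gij unfolding offset2_swap[OF ij] by (intro has_pd_along_line) auto
  qed
  then show thesis
    using that \<xi> mvt1 by auto
qed

lemma mixed_diff_quotient_tendsto:
  assumes U: "open U" "p \<in> U" and ij: "i < 4" "j < 4" "i \<noteq> j"
    and Gi: "\<forall>q\<in>U. has_pd i G q (Gi q)" and Gij: "\<forall>q\<in>U. has_pd j Gi q (Gij q)"
    and cont: "continuous_on U Gij"
  shows "((\<lambda>h. mixed_diff i j G p h / (h * h)) \<longlongrightarrow> Gij p) (at_right 0)"
proof (rule tendstoI)
  fix e :: real assume "e > 0"
  obtain d1 where "d1 > 0" and d1: "\<forall>q\<in>U. dist q p < d1 \<longrightarrow> dist (Gij q) (Gij p) < e"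
    using cont U \<open>e > 0\<close> unfolding continuous_on_eq_continuous_within continuous_within_eps_delta
    by blast
  obtain d2 where "d2 > 0" and d2: "ball p d2 \<subseteq> U"
    using U open_contains_ball by blast
  define d where "d = min d1 d2"
  have near: "offset2 i j s t p \<in> U \<and> dist (offset2 i j s t p) p < d1"
    if "0 \<le> s" "s \<le> h" "0 \<le> t" "t \<le> h" "h < d / 2" for s t h
    using dist_offset2[OF ij, of s t p] that d2 unfolding d_def by (auto simp: dist_commute)
  show "eventually (\<lambda>h. dist (mixed_diff i j G p h / (h * h)) (Gij p) < e) (at_right 0)"
    unfolding eventually_at_right_field
  proof (intro exI[of _ "d / 2"] conjI allI impI)
    show "0 < d / 2" using \<open>d1 > 0\<close> \<open>d2 > 0\<close> unfolding d_def by simp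
    fix h :: real assume h: "0 < h" "h < d / 2"
    then obtain \<xi> \<eta> where "0 < \<xi>" "\<xi> < h" "0 < \<eta>" "\<eta> < h"
      and mvt: "mixed_diff i j G p h = h * h * Gij (offset2 i j \<xi> \<eta> p)"
      using mixed_diff_mvt[OF ij h(1) Gi Gij, of p] near by blast
    then have "offset2 i j \<xi> \<eta> p \<in> U" "dist (offset2 i j \<xi> \<eta> p) p < d1"
      using near[of \<xi> h \<eta>] h by auto
    then have "dist (Gij (offset2 i j \<xi> \<eta> p)) (Gij p) < e"
      using d1 by blast
    then show "dist (mixed_diff i j G p h / (h * h)) (Gij p) < e"
      using mvt h by simp
  qed
qed

text \<open>Schwarz's theorem: both mixed partials are limits of the same second difference quotient.\<close>
theorem pd_mixed_symmetric:
  assumes U: "open U" "p \<in> U" and ij: "i < 4" "j < 4" "i \<noteq> j"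
    and Gi: "\<forall>q\<in>U. has_pd i G q (Gi q)" and Gj: "\<forall>q\<in>U. has_pd j G q (Gj q)"
    and Gij: "\<forall>q\<in>U. has_pd j Gi q (Gij q)" and Gji: "\<forall>q\<in>U. has_pd i Gj q (Gji q)"
    and "continuous_on U Gij" "continuous_on U Gji"
  shows "Gij p = Gji p"
proof (rule tendsto_unique[OF trivial_limit_at_right_real])
  show "((\<lambda>h. mixed_diff i j G p h / (h * h)) \<longlongrightarrow> Gij p) (at_right 0)"
    by (rule mixed_diff_quotient_tendsto) (use assms in auto)
  have "((\<lambda>h. mixed_diff j i G p h / (h * h)) \<longlongrightarrow> Gji p) (at_right 0)"
    by (rule mixed_diff_quotient_tendsto) (use assms in auto)
  then show "((\<lambda>h. mixed_diff i j G p h / (h * h)) \<longlongrightarrow> Gji p) (at_right 0)"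
    using mixed_diff_commute[OF ij] by simp
qed

lemma smooth_on_has_pd:
  "smooth_on U E \<Longrightarrow> set ks \<subseteq> {..<4} \<Longrightarrow> k < 4 \<Longrightarrow> q \<in> U \<Longrightarrow> has_pd k (pdl ks E) q (pdl (k # ks) E q)"
  unfolding smooth_on_def has_pd_def by blast

lemma smooth_on_continuous_pdl: "smooth_on U E \<Longrightarrow> set ks \<subseteq> {..<4} \<Longrightarrow> continuous_on U (pdl ks E)"
  unfolding smooth_on_def by blast

lemma smooth_on_pdl_swap:
  assumes "open U" "smooth_on U E" "q \<in> U" "i < 4" "j < 4" "set ks \<subseteq> {..<4}"
  shows "pdl (i # j # ks) E q = pdl (j # i # ks) E q"
proof (cases "i = j")
  case False
  have "pdl (j # i # ks) E q = pdl (i # j # ks) E q"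
    by (rule pd_mixed_symmetric[OF assms(1,3,4,5) False,
          where G="pdl ks E" and Gi="pdl (i # ks) E" and Gj="pdl (j # ks) E"
            and Gij="pdl (j # i # ks) E" and Gji="pdl (i # j # ks) E"])
       (use assms in \<open>auto simp del: pdl.simps
          intro!: smooth_on_has_pd[OF assms(2)] smooth_on_continuous_pdl[OF assms(2)]\<close>)
  then show ?thesis by simp
qed simp

lemma smooth_on_pdl_swap_inner:
  assumes "open U" "smooth_on U E" "i < 4" "j < 4" "set ks \<subseteq> {..<4}" "q \<in> U"
  shows "pdl (ks' @ i # j # ks) E q = pdl (ks' @ j # i # ks) E q"
  using assms(6)
proof (induction ks' arbitrary: q)
  case Nil
  then show ?case using smooth_on_pdl_swap assms by simp
next
  case (Cons a ks')
  then show ?case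
    using pd_cong_open[OF assms(1) Cons.prems, of "pdl (ks' @ i # j # ks) E" "pdl (ks' @ j # i # ks) E" a]
    by simp
qed

section \<open>The projective factor of the spray\<close>

declare One_nat_def [simp del] \<comment> \<open>keep the index \<open>1\<close> from turning into \<open>Suc 0\<close>\<close>

lemma ycoord_eq [simp]: "ycoord 1 q = coord 2 q" "ycoord 2 q = coord 3 q"
  unfolding ycoord_def by (simp_all add: numeral_3_eq_3)

lemma dY_eq [simp]: "dY 1 F = pd 2 F" "dY 2 F = pd 3 F"
  unfolding dY_def by (simp_all add: numeral_3_eq_3)

lemma dX_eq [simp]: "dX 1 F = pd 0 F" "dX 2 F = pd 1 F"
  unfolding dX_def by (simp_all add: One_nat_def)

lemma spray_domain_iff: "q \<in> spray_domain \<longleftrightarrow> coord 2 q \<noteq> 0"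
  unfolding spray_domain_def by simp

lemma continuous_on_coord: "k < 4 \<Longrightarrow> continuous_on S (coord k)"
proof -
  assume "k < 4"
  then have "coord k = (if k = 0 then fst else if k = 1 then fst \<circ> snd
      else if k = 2 then fst \<circ> snd \<circ> snd else snd \<circ> snd \<circ> snd)"
    by (auto simp: fun_eq_iff split: prod.splits)
  then show ?thesis
    by (auto intro!: continuous_intros)
qed

lemma open_spray_domain: "open spray_domain"
proof -
  have "spray_domain = {q. coord 2 q \<noteq> 0}"
    by (auto simp: spray_domain_iff)
  also have "open \<dots>"
    by (rule open_Collect_neq) (auto intro: continuous_on_coord)
  finally show ?thesis .
qed

definition slope :: "pt \<Rightarrow> real" where
  "slope q = coord 3 q / coord 2 q"

text \<open>\<open>yperp a\<close> is \<open>y\<^sub>1\<^sup>2\<close> times the \<open>y\<^sup>a\<close>-derivative of \<open>slope\<close>, i.e. the vector \<open>(-y\<^sub>2, y\<^sub>1)\<close>.\<close>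
definition yperp :: "nat \<Rightarrow> pt \<Rightarrow> real" where
  "yperp a q = (if a = 1 then - coord 3 q else coord 2 q)"

definition yperp_deriv :: "nat \<Rightarrow> nat \<Rightarrow> real" where
  "yperp_deriv c a = (if c = 1 \<and> a = 2 then 1 else if c = 2 \<and> a = 1 then -1 else 0)"

definition kdelta :: "nat \<Rightarrow> nat \<Rightarrow> real" where
  "kdelta a b = (if a = b then 1 else 0)"

text \<open>The spray is \<open>f\<^sup>l = y\<^sup>l P\<close> with projective factor \<open>P = y\<^sub>1 f(y\<^sub>2/y\<^sub>1)\<close>; \<open>Pf1\<close>, \<open>Pf2\<close>, \<open>Pf3\<close>
  are closed forms of its \<open>y\<close>-derivatives of order 1, 2, 3.\<close>
definition Pf :: "(real \<Rightarrow> real) \<Rightarrow> pt \<Rightarrow> real" where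
  "Pf f q = coord 2 q * f (slope q)"

definition Pf1 :: "(real \<Rightarrow> real) \<Rightarrow> nat \<Rightarrow> pt \<Rightarrow> real" where
  "Pf1 f a q = (if a = 1 then f (slope q) - slope q * deriv f (slope q) else deriv f (slope q))"

definition Pf2 :: "(real \<Rightarrow> real) \<Rightarrow> nat \<Rightarrow> nat \<Rightarrow> pt \<Rightarrow> real" where
  "Pf2 f a b q = deriv (deriv f) (slope q) * yperp a q * yperp b q / coord 2 q ^ 3"

definition Pf3 :: "(real \<Rightarrow> real) \<Rightarrow> nat \<Rightarrow> nat \<Rightarrow> nat \<Rightarrow> pt \<Rightarrow> real" where
  "Pf3 f a b c q = deriv (deriv (deriv f)) (slope q) * yperp c q * yperp a q * yperp b q / coord 2 q ^ 5
     + deriv (deriv f) (slope q) * ((yperp_deriv c a * yperp b q + yperp a q * yperp_deriv c b) / coord 2 q ^ 3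
         - 3 * kdelta c 1 * yperp a q * yperp b q / coord 2 q ^ 4)"

lemma has_pd_x_const: "(\<And>t. F (upd m t q) = F q) \<Longrightarrow> has_pd m F q 0"
  unfolding has_pd_def by simp

lemma coord_y_upd_x: "m < 2 \<Longrightarrow> coord 2 (upd m t q) = coord 2 q \<and> coord 3 (upd m t q) = coord 3 q"
  by (cases q) auto

lemma slope_upd_x: "m < 2 \<Longrightarrow> slope (upd m t q) = slope q"
  unfolding slope_def using coord_y_upd_x by simp

lemma yperp_upd_x: "m < 2 \<Longrightarrow> yperp a (upd m t q) = yperp a q"
  unfolding yperp_def using coord_y_upd_x by simp

lemma has_pd_x_Pf: "m < 2 \<Longrightarrow> has_pd m (Pf f) q 0"
  and has_pd_x_Pf1: "m < 2 \<Longrightarrow> has_pd m (Pf1 f a) q 0"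
  and has_pd_x_Pf2: "m < 2 \<Longrightarrow> has_pd m (Pf2 f a b) q 0"
  and has_pd_x_Pf3: "m < 2 \<Longrightarrow> has_pd m (Pf3 f a b c) q 0"
  by (intro has_pd_x_const;
      simp add: Pf_def Pf1_def Pf2_def Pf3_def slope_upd_x yperp_upd_x coord_y_upd_x)+

lemma euler_Pf: "coord 2 q \<noteq> 0 \<Longrightarrow> coord 2 q * Pf1 f 1 q + coord 3 q * Pf1 f 2 q = Pf f q"
  unfolding Pf_def Pf1_def slope_def by (simp add: field_simps)

lemma euler_Pf1: "coord 2 q \<noteq> 0 \<Longrightarrow> coord 2 q * Pf2 f 1 2 q + coord 3 q * Pf2 f 2 2 q = 0"
  unfolding Pf2_def yperp_def by (simp add: field_simps)

lemma Pf2_22_eq: "coord 2 q \<noteq> 0 \<Longrightarrow> Pf2 f 2 2 q = deriv (deriv f) (slope q) / coord 2 q"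
  unfolding Pf2_def yperp_def by (simp add: power3_eq_cube)

lemma Pf3_222_eq: "Pf3 f 2 2 2 q = deriv (deriv (deriv f)) (slope q) * coord 2 q ^ 3 / coord 2 q ^ 5"
  unfolding Pf3_def yperp_def yperp_deriv_def kdelta_def by (simp add: power3_eq_cube mult.assoc)

lemma has_pd_coord_y: "l \<in> Idx \<Longrightarrow> c \<in> Idx \<Longrightarrow> has_pd (c + 1) (coord (l + 1)) q (kdelta l c)"
  by (rule has_pd_coord) (auto simp: Idx_def kdelta_def)

lemma has_pd_yperp: "c \<in> Idx \<Longrightarrow> a \<in> Idx \<Longrightarrow> has_pd (c + 1) (yperp a) q (yperp_deriv c a)"
  by (cases q) (auto simp: Idx_def has_pd_def yperp_def yperp_deriv_def intro!: derivative_eq_intros)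

lemma has_pd_inverse_cube:
  "coord 2 q \<noteq> 0 \<Longrightarrow> c \<in> Idx \<Longrightarrow> has_pd (c + 1) (\<lambda>q. 1 / coord 2 q ^ 3) q (- 3 * kdelta c 1 / coord 2 q ^ 4)"
  by (cases q) (auto simp: Idx_def has_pd_def kdelta_def field_simps eval_nat_numeral One_nat_def
                 intro!: derivative_eq_intros)

lemma DERIV_compose_everywhere:
  assumes "\<And>x. (F has_real_derivative F' x) (at x)" "(g has_real_derivative g') (at t)"
    "D = F' (g t) * g'"
  shows "((\<lambda>t. F (g t)) has_real_derivative D) (at t)"
  using DERIV_chain2[OF assms(1) assms(2)] assms(3) by simp

lemma has_pd_comp_slope:
  assumes "\<And>x. (F has_real_derivative F' x) (at x)" "coord 2 q \<noteq> 0" "c \<in> Idx"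
  shows "has_pd (c + 1) (\<lambda>q. F (slope q)) q (F' (slope q) * yperp c q / coord 2 q ^ 2)"
  using assms(2,3)
  by (cases q) (auto simp: Idx_def has_pd_def slope_def yperp_def field_simps power2_eq_square
                 intro!: derivative_eq_intros DERIV_compose_everywhere[OF assms(1)])

locale thrice_differentiable =
  fixes f :: "real \<Rightarrow> real"
  assumes has_deriv0: "\<And>x. (f has_real_derivative deriv f x) (at x)"
    and has_deriv1: "\<And>x. (deriv f has_real_derivative deriv (deriv f) x) (at x)"
    and has_deriv2: "\<And>x. (deriv (deriv f) has_real_derivative deriv (deriv (deriv f)) x) (at x)"
begin

lemma has_pd_Pf:
  assumes "coord 2 q \<noteq> 0" "c \<in> Idx"
  shows "has_pd (c + 1) (Pf f) q (Pf1 f c q)"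
  using assms
  by (cases q) (auto simp: Idx_def has_pd_def Pf_def Pf1_def slope_def field_simps power2_eq_square
                 intro!: derivative_eq_intros DERIV_compose_everywhere[OF has_deriv0])

lemma has_pd_Pf1:
  assumes "coord 2 q \<noteq> 0" "c \<in> Idx" "a \<in> Idx"
  shows "has_pd (c + 1) (Pf1 f a) q (Pf2 f a c q)"
proof -
  obtain x1 x2 y1 y2 where q: "q = (x1, x2, y1, y2)"
    by (cases q)
  from assms(2,3) consider "c = 1" "a = 1" | "c = 1" "a = 2" | "c = 2" "a = 1" | "c = 2" "a = 2"
    by (auto simp: Idx_def)
  then show ?thesis
    using assms(1) unfolding q
    by cases (auto simp: has_pd_def Pf1_def Pf2_def slope_def yperp_def field_simps power2_eq_square power3_eq_cube
        intro!: derivative_eq_intros DERIV_compose_everywhere[OF has_deriv0] DERIV_compose_everywhere[OF has_deriv1])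
qed

lemma has_pd_Pf2:
  assumes "coord 2 q \<noteq> 0" "c \<in> Idx" "a \<in> Idx" "b \<in> Idx"
  shows "has_pd (c + 1) (Pf2 f a b) q (Pf3 f a b c q)"
proof -
  have Pf2_eq: "Pf2 f a b = (\<lambda>q. deriv (deriv f) (slope q) * (yperp a q * yperp b q * (1 / coord 2 q ^ 3)))"
    unfolding Pf2_def by auto
  show ?thesis
    unfolding Pf2_eq
    by (rule has_pd_mult[OF has_pd_comp_slope[OF has_deriv2 assms(1,2)]
          has_pd_mult[OF has_pd_mult[OF has_pd_yperp[OF assms(2,3)] has_pd_yperp[OF assms(2,4)] refl]
            has_pd_inverse_cube[OF assms(1,2)] refl]])
       (use assms(1) in \<open>simp add: Pf3_def field_simps eval_nat_numeral One_nat_def\<close>)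
qed

lemma continuous_on_Pf2_22: "continuous_on spray_domain (Pf2 f 2 2)"
proof -
  have "continuous_on UNIV (deriv (deriv f))"
    using has_deriv2 DERIV_isCont continuous_at_imp_continuous_on by blast
  moreover have "continuous_on spray_domain slope"
    unfolding slope_def
    by (intro continuous_intros continuous_on_coord) (auto simp: spray_domain_iff)
  ultimately have "continuous_on spray_domain (\<lambda>q. deriv (deriv f) (slope q))"
    using continuous_on_compose2 by blast
  then have "continuous_on spray_domain (\<lambda>q. deriv (deriv f) (slope q) / coord 2 q)"
    by (intro continuous_on_divide continuous_on_coord) (auto simp: spray_domain_iff)
  then show ?thesis
    by (rule continuous_on_eq) (auto simp: spray_domain_iff Pf2_22_eq)
qed

end

section \<open>Christoffel symbols and Berwald curvature of the spray\<close>

lemma spray_f_eq: "l \<in> Idx \<Longrightarrow> spray_f f l = (\<lambda>q. coord (l + 1) q * Pf f q)"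
  by (rule ext) (auto simp: Idx_def spray_f_def ycoord_def Pf_def slope_def power2_eq_square)

definition spray1 :: "(real \<Rightarrow> real) \<Rightarrow> nat \<Rightarrow> nat \<Rightarrow> pt \<Rightarrow> real" where
  "spray1 f l k q = coord (l + 1) q * Pf1 f k q + kdelta l k * Pf f q"

definition spray2 :: "(real \<Rightarrow> real) \<Rightarrow> nat \<Rightarrow> nat \<Rightarrow> nat \<Rightarrow> pt \<Rightarrow> real" where
  "spray2 f l k j q = coord (l + 1) q * Pf2 f k j q + kdelta l j * Pf1 f k q + kdelta l k * Pf1 f j q"

definition spray3 :: "(real \<Rightarrow> real) \<Rightarrow> nat \<Rightarrow> nat \<Rightarrow> nat \<Rightarrow> nat \<Rightarrow> pt \<Rightarrow> real" where
  "spray3 f l k j i q = coord (l + 1) q * Pf3 f k j i q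
     + kdelta l i * Pf2 f k j q + kdelta l j * Pf2 f k i q + kdelta l k * Pf2 f j i q"

context thrice_differentiable
begin

lemma has_pd_spray_f:
  assumes "coord 2 q \<noteq> 0" "l \<in> Idx" "k \<in> Idx"
  shows "has_pd (k + 1) (spray_f f l) q (spray1 f l k q)"
  unfolding spray_f_eq[OF assms(2)] spray1_def
  using assms by (auto intro!: has_pd_intros has_pd_coord_y has_pd_Pf)

lemma has_pd_spray1:
  "coord 2 q \<noteq> 0 \<Longrightarrow> l \<in> Idx \<Longrightarrow> k \<in> Idx \<Longrightarrow> j \<in> Idx \<Longrightarrow>
    has_pd (j + 1) (spray1 f l k) q (spray2 f l k j q)"
  unfolding spray1_def[abs_def] spray2_def
  by (auto intro!: has_pd_intros has_pd_coord_y has_pd_Pf has_pd_Pf1)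

lemma has_pd_spray2:
  "coord 2 q \<noteq> 0 \<Longrightarrow> l \<in> Idx \<Longrightarrow> k \<in> Idx \<Longrightarrow> j \<in> Idx \<Longrightarrow> i \<in> Idx \<Longrightarrow>
    has_pd (i + 1) (spray2 f l k j) q (spray3 f l k j i q)"
  unfolding spray2_def[abs_def] spray3_def
  by (auto intro!: has_pd_intros has_pd_coord_y has_pd_Pf1 has_pd_Pf2)

lemma pd_spray_f:
  "q \<in> spray_domain \<Longrightarrow> l \<in> Idx \<Longrightarrow> k \<in> Idx \<Longrightarrow> pd (k + 1) (spray_f f l) q = spray1 f l k q"
  by (rule has_pd_imp_pd, rule has_pd_spray_f) (auto simp: spray_domain_iff)

lemma pd_pd_spray_f:
  assumes "q \<in> spray_domain" "l \<in> Idx" "k \<in> Idx" "j \<in> Idx"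
  shows "pd (j + 1) (pd (k + 1) (spray_f f l)) q = spray2 f l k j q"
proof -
  have "pd (j + 1) (pd (k + 1) (spray_f f l)) q = pd (j + 1) (spray1 f l k) q"
    by (rule pd_cong_open[OF open_spray_domain assms(1)]) (use pd_spray_f assms in auto)
  also have "\<dots> = spray2 f l k j q"
    using assms by (intro has_pd_imp_pd has_pd_spray1) (auto simp: spray_domain_iff)
  finally show ?thesis .
qed

lemma pd_pd_pd_spray_f:
  assumes "q \<in> spray_domain" "l \<in> Idx" "k \<in> Idx" "j \<in> Idx" "i \<in> Idx"
  shows "pd (i + 1) (pd (j + 1) (pd (k + 1) (spray_f f l))) q = spray3 f l k j i q"
proof -
  have "pd (i + 1) (pd (j + 1) (pd (k + 1) (spray_f f l))) q = pd (i + 1) (spray2 f l k j) q"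
    by (rule pd_cong_open[OF open_spray_domain assms(1)]) (use pd_pd_spray_f assms in auto)
  also have "\<dots> = spray3 f l k j i q"
    using assms by (intro has_pd_imp_pd has_pd_spray2) (auto simp: spray_domain_iff)
  finally show ?thesis .
qed

lemma Gam1_eq:
  "q \<in> spray_domain \<Longrightarrow> l \<in> Idx \<Longrightarrow> i \<in> Idx \<Longrightarrow> Gam1 f l i q = - (1/2) * spray1 f l i q"
  unfolding Gam1_def dY_def using pd_spray_f by simp

lemma Gam2_eq:
  assumes "q \<in> spray_domain" "l \<in> Idx" "i \<in> Idx" "k \<in> Idx"
  shows "Gam2 f l i k q = - (1/2) * spray2 f l i k q"
proof -
  have "Gam2 f l i k q = pd (k + 1) (\<lambda>q. - (1/2) * spray1 f l i q) q"
    unfolding Gam2_def dY_def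
    by (rule pd_cong_open[OF open_spray_domain assms(1)]) (use Gam1_eq assms in auto)
  also have "\<dots> = - (1/2) * spray2 f l i k q"
    using assms by (intro has_pd_imp_pd) (auto simp: spray_domain_iff intro!: has_pd_intros has_pd_spray1)
  finally show ?thesis .
qed

lemma berwald_eq:
  "q \<in> spray_domain \<Longrightarrow> l \<in> Idx \<Longrightarrow> i \<in> Idx \<Longrightarrow> j \<in> Idx \<Longrightarrow> k \<in> Idx \<Longrightarrow>
    berwald f l i j k q = - (1/2) * spray3 f l k j i q"
  unfolding berwald_def dY_def using pd_pd_pd_spray_f by simp

end

section \<open>Landsberg metrics with this spray\<close>

locale landsberg_metric = thrice_differentiable f for f +
  fixes U :: "pt set" and E :: "pt \<Rightarrow> real"
  assumes open_U: "open U" and U_subset: "U \<subseteq> spray_domain" and smooth: "smooth_on U E"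
    and homogeneous: "\<And>q. q \<in> U \<Longrightarrow> cond_H E q"
    and euler_lagrange: "\<And>q. q \<in> U \<Longrightarrow> cond_EL f E q"
    and landsberg: "\<And>q. q \<in> U \<Longrightarrow> cond_Ls f E q"
    and pos_def: "\<And>q. q \<in> U \<Longrightarrow> pos_def_at E q"
begin

lemma y1_nonzero: "q \<in> U \<Longrightarrow> coord 2 q \<noteq> 0"
  using U_subset spray_domain_iff by blast

lemma has_pd_E: "q \<in> U \<Longrightarrow> k < 4 \<Longrightarrow> has_pd k E q (pd k E q)"
  using smooth_on_has_pd[OF smooth, of "[]" k q] by simp

lemma has_pd_pd_E: "q \<in> U \<Longrightarrow> k < 4 \<Longrightarrow> j < 4 \<Longrightarrow> has_pd k (pd j E) q (pd k (pd j E) q)"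
  using smooth_on_has_pd[OF smooth, of "[j]" k q] by simp

lemma has_pd_pd_pd_E:
  "q \<in> U \<Longrightarrow> k < 4 \<Longrightarrow> j < 4 \<Longrightarrow> i < 4 \<Longrightarrow> has_pd k (pd j (pd i E)) q (pd k (pd j (pd i E)) q)"
  using smooth_on_has_pd[OF smooth, of "[j, i]" k q] by simp

lemma pd_E_swap: "q \<in> U \<Longrightarrow> i < 4 \<Longrightarrow> j < 4 \<Longrightarrow> pd i (pd j E) q = pd j (pd i E) q"
  using smooth_on_pdl_swap[OF open_U smooth, of q i j "[]"] by simp

lemma pd_E_y1y2: "q \<in> U \<Longrightarrow> pd 3 (pd 2 E) q = pd 2 (pd 3 E) q"
  using pd_E_swap by simp

lemma pd_pd_E_swap_outer:
  "q \<in> U \<Longrightarrow> i < 4 \<Longrightarrow> j < 4 \<Longrightarrow> a < 4 \<Longrightarrow> pd i (pd j (pd a E)) q = pd j (pd i (pd a E)) q"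
  using smooth_on_pdl_swap[OF open_U smooth, of q i j "[a]"] by simp

lemma pd_pd_E_swap_inner:
  "q \<in> U \<Longrightarrow> i < 4 \<Longrightarrow> j < 4 \<Longrightarrow> a < 4 \<Longrightarrow> pd a (pd i (pd j E)) q = pd a (pd j (pd i E)) q"
  using smooth_on_pdl_swap_inner[OF open_U smooth, of i j "[]" q "[a]"] by simp

lemma has_pd_vanishing_on_U: "(\<And>q. q \<in> U \<Longrightarrow> F q = 0) \<Longrightarrow> q \<in> U \<Longrightarrow> has_pd k F q D \<Longrightarrow> D = 0"
  using has_pd_vanishing_on_open[OF open_U] by blast

lemma pd_eq_on_U: "(\<And>q. q \<in> U \<Longrightarrow> F q = G q) \<Longrightarrow> q \<in> U \<Longrightarrow> has_pd k G q D \<Longrightarrow> pd k F q = D"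
  using pd_cong_open[OF open_U] has_pd_imp_pd by metis

lemma has_pd_y_Pf:
  "q \<in> U \<Longrightarrow> has_pd 2 (Pf f) q (Pf1 f 1 q)" "q \<in> U \<Longrightarrow> has_pd 3 (Pf f) q (Pf1 f 2 q)"
  using has_pd_Pf[of q 1] has_pd_Pf[of q 2] y1_nonzero
  by (simp_all add: Idx_def numeral_3_eq_3)

lemma has_pd_y_Pf1:
  "q \<in> U \<Longrightarrow> a \<in> Idx \<Longrightarrow> has_pd 2 (Pf1 f a) q (Pf2 f a 1 q)"
  "q \<in> U \<Longrightarrow> a \<in> Idx \<Longrightarrow> has_pd 3 (Pf1 f a) q (Pf2 f a 2 q)"
  using has_pd_Pf1[of q 1 a] has_pd_Pf1[of q 2 a] y1_nonzero
  by (simp_all add: Idx_def numeral_3_eq_3)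

lemma has_pd_y_Pf2:
  "q \<in> U \<Longrightarrow> a \<in> Idx \<Longrightarrow> b \<in> Idx \<Longrightarrow> has_pd 2 (Pf2 f a b) q (Pf3 f a b 1 q)"
  "q \<in> U \<Longrightarrow> a \<in> Idx \<Longrightarrow> b \<in> Idx \<Longrightarrow> has_pd 3 (Pf2 f a b) q (Pf3 f a b 2 q)"
  using has_pd_Pf2[of q 1 a b] has_pd_Pf2[of q 2 a b] y1_nonzero
  by (simp_all add: Idx_def numeral_3_eq_3)

lemmas has_pd_on_U_intros = has_pd_intros has_pd_coord has_pd_E has_pd_pd_E has_pd_pd_pd_E
  has_pd_y_Pf has_pd_y_Pf1 has_pd_y_Pf2
  has_pd_x_Pf[of 0] has_pd_x_Pf[of 1] has_pd_x_Pf1[of 0] has_pd_x_Pf1[of 1]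
  has_pd_x_Pf2[of 0] has_pd_x_Pf2[of 1] has_pd_x_Pf3[of 0] has_pd_x_Pf3[of 1]

lemma euler_E:
  assumes "q \<in> U"
  shows "coord 2 q * pd 2 E q + coord 3 q * pd 3 E q = 2 * E q"
  using homogeneous[OF assms] unfolding cond_H_def Idx_def by simp

lemma euler_pd_E:
  assumes "q \<in> U" "k < 4"
  shows "(if k = 2 then pd 2 E q else 0) + (if k = 3 then pd 3 E q else 0)
     + coord 2 q * pd k (pd 2 E) q + coord 3 q * pd k (pd 3 E) q - 2 * pd k E q = 0"
  by (rule has_pd_vanishing_on_U[of "\<lambda>q. coord 2 q * pd 2 E q + coord 3 q * pd 3 E q - 2 * E q" q k, OF _ assms(1)])
     (simp add: euler_E, use assms in \<open>auto intro!: has_pd_on_U_intros\<close>)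

lemma euler_E_y1: "q \<in> U \<Longrightarrow> coord 2 q * pd 2 (pd 2 E) q + coord 3 q * pd 2 (pd 3 E) q = pd 2 E q"
  using euler_pd_E[of q 2] by simp

lemma euler_E_y2: "q \<in> U \<Longrightarrow> coord 2 q * pd 3 (pd 2 E) q + coord 3 q * pd 3 (pd 3 E) q = pd 3 E q"
  using euler_pd_E[of q 3] by simp

lemma euler_E_x1: "q \<in> U \<Longrightarrow> coord 2 q * pd 0 (pd 2 E) q + coord 3 q * pd 0 (pd 3 E) q = 2 * pd 0 E q"
  using euler_pd_E[of q 0] by simp

lemma euler_E_x2: "q \<in> U \<Longrightarrow> coord 2 q * pd 1 (pd 2 E) q + coord 3 q * pd 1 (pd 3 E) q = 2 * pd 1 E q"
  using euler_pd_E[of q 1] by simp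

lemma euler_E_y2y2:
  "q \<in> U \<Longrightarrow> coord 2 q * pd 3 (pd 3 (pd 2 E)) q + coord 3 q * pd 3 (pd 3 (pd 3 E)) q = 0"
  by (rule has_pd_vanishing_on_U[of "\<lambda>q. coord 2 q * pd 3 (pd 2 E) q + coord 3 q * pd 3 (pd 3 E) q - pd 3 E q" q 3])
     (simp add: euler_E_y2, auto intro!: has_pd_on_U_intros)

lemma E_pos: assumes q: "q \<in> U" shows "E q > 0"
proof -
  have "(\<Sum>i\<in>Idx. \<Sum>j\<in>Idx. gmet E i j q * ycoord i q * ycoord j q) > 0"
    using pos_def[OF q] y1_nonzero[OF q] unfolding pos_def_at_def
    by (elim allE[of _ "\<lambda>i. ycoord i q"]) (auto simp: Idx_def)
  also have "(\<Sum>i\<in>Idx. \<Sum>j\<in>Idx. gmet E i j q * ycoord i q * ycoord j q) =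
     coord 2 q * (coord 2 q * pd 2 (pd 2 E) q + coord 3 q * pd 2 (pd 3 E) q)
     + coord 3 q * (coord 2 q * pd 3 (pd 2 E) q + coord 3 q * pd 3 (pd 3 E) q)"
    by (simp add: Idx_def gmet_def algebra_simps)
  also have "\<dots> = 2 * E q"
    using euler_E_y1[OF q] euler_E_y2[OF q] euler_E[OF q] by simp
  finally show ?thesis by simp
qed

lemma euler_lagrange_y1:
  assumes q: "q \<in> U"
  shows "coord 2 q * pd 0 (pd 2 E) q + coord 3 q * pd 1 (pd 2 E) q + Pf f q * pd 2 E q - pd 0 E q = 0"
proof -
  have "coord 2 q * pd 0 (pd 2 E) q + coord 3 q * pd 1 (pd 2 E) q
     + Pf f q * (coord 2 q * pd 2 (pd 2 E) q + coord 3 q * pd 3 (pd 2 E) q) - pd 0 E q = 0"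
    using euler_lagrange[OF q] unfolding cond_EL_def by (simp add: Idx_def spray_f_eq algebra_simps)
  moreover have "coord 2 q * pd 2 (pd 2 E) q + coord 3 q * pd 3 (pd 2 E) q = pd 2 E q"
    using euler_E_y1[OF q] pd_E_y1y2[OF q] by simp
  ultimately show ?thesis by simp
qed

lemma euler_lagrange_y2:
  assumes q: "q \<in> U"
  shows "coord 2 q * pd 0 (pd 3 E) q + coord 3 q * pd 1 (pd 3 E) q + Pf f q * pd 3 E q - pd 1 E q = 0"
proof -
  have "coord 2 q * pd 0 (pd 3 E) q + coord 3 q * pd 1 (pd 3 E) q
     + Pf f q * (coord 2 q * pd 2 (pd 3 E) q + coord 3 q * pd 3 (pd 3 E) q) - pd 1 E q = 0"
    using euler_lagrange[OF q] unfolding cond_EL_def by (simp add: Idx_def spray_f_eq algebra_simps)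
  moreover have "coord 2 q * pd 2 (pd 3 E) q + coord 3 q * pd 3 (pd 3 E) q = pd 3 E q"
    using euler_E_y2[OF q] pd_E_y1y2[OF q] by simp
  ultimately show ?thesis by simp
qed

lemma E_x_contracted:
  assumes q: "q \<in> U"
  shows "coord 2 q * pd 0 E q + coord 3 q * pd 1 E q = - 2 * Pf f q * E q"
  using euler_lagrange_y1[OF q] euler_lagrange_y2[OF q] euler_E_x1[OF q] euler_E_x2[OF q] euler_E[OF q]
  by algebra

lemma E_x1_eq:
  assumes q: "q \<in> U"
  shows "pd 0 E q = - (Pf1 f 1 q * E q + 1/2 * Pf f q * pd 2 E q)"
proof -
  have "pd 0 E q + coord 2 q * pd 2 (pd 0 E) q + coord 3 q * pd 2 (pd 1 E) q
      + 2 * (Pf f q * pd 2 E q + Pf1 f 1 q * E q) = 0"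
    by (rule has_pd_vanishing_on_U[of "\<lambda>q. coord 2 q * pd 0 E q + coord 3 q * pd 1 E q + 2 * Pf f q * E q" q 2, OF _ q])
       (simp add: E_x_contracted, use q in \<open>auto intro!: has_pd_on_U_intros simp: algebra_simps\<close>)
  moreover have "pd 2 (pd 0 E) q = pd 0 (pd 2 E) q" "pd 2 (pd 1 E) q = pd 1 (pd 2 E) q"
    using pd_E_swap[OF q] by auto
  ultimately show ?thesis
    using euler_lagrange_y1[OF q] by algebra
qed

lemma E_x2_eq:
  assumes q: "q \<in> U"
  shows "pd 1 E q = - (Pf1 f 2 q * E q + 1/2 * Pf f q * pd 3 E q)"
proof -
  have "pd 1 E q + coord 2 q * pd 3 (pd 0 E) q + coord 3 q * pd 3 (pd 1 E) q
      + 2 * (Pf f q * pd 3 E q + Pf1 f 2 q * E q) = 0"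
    by (rule has_pd_vanishing_on_U[of "\<lambda>q. coord 2 q * pd 0 E q + coord 3 q * pd 1 E q + 2 * Pf f q * E q" q 3, OF _ q])
       (simp add: E_x_contracted, use q in \<open>auto intro!: has_pd_on_U_intros simp: algebra_simps\<close>)
  moreover have "pd 3 (pd 0 E) q = pd 0 (pd 3 E) q" "pd 3 (pd 1 E) q = pd 1 (pd 3 E) q"
    using pd_E_swap[OF q] by auto
  ultimately show ?thesis
    using euler_lagrange_y2[OF q] by algebra
qed

lemma E_x1_y2:
  "q \<in> U \<Longrightarrow> pd 3 (pd 0 E) q = - (Pf1 f 1 q * pd 3 E q + Pf2 f 1 2 q * E q
     + 1/2 * (Pf f q * pd 3 (pd 2 E) q + Pf1 f 2 q * pd 2 E q))"
  by (rule pd_eq_on_U[of "pd 0 E" "\<lambda>q. - (Pf1 f 1 q * E q + 1/2 * Pf f q * pd 2 E q)", OF E_x1_eq])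
     (auto intro!: has_pd_on_U_intros simp: Idx_def algebra_simps)

lemma E_x2_y2:
  "q \<in> U \<Longrightarrow> pd 3 (pd 1 E) q = - (Pf1 f 2 q * pd 3 E q + Pf2 f 2 2 q * E q
     + 1/2 * (Pf f q * pd 3 (pd 3 E) q + Pf1 f 2 q * pd 3 E q))"
  by (rule pd_eq_on_U[of "pd 1 E" "\<lambda>q. - (Pf1 f 2 q * E q + 1/2 * Pf f q * pd 3 E q)", OF E_x2_eq])
     (auto intro!: has_pd_on_U_intros simp: Idx_def algebra_simps)

lemma E_x2_y2y2:
  "q \<in> U \<Longrightarrow> pd 3 (pd 3 (pd 1 E)) q = - (Pf1 f 2 q * pd 3 (pd 3 E) q + 2 * Pf2 f 2 2 q * pd 3 E q
     + Pf3 f 2 2 2 q * E q + 1/2 * (Pf f q * pd 3 (pd 3 (pd 3 E)) q + 2 * Pf1 f 2 q * pd 3 (pd 3 E) q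
     + Pf2 f 2 2 q * pd 3 E q))"
  by (rule pd_eq_on_U[of "pd 3 (pd 1 E)" "\<lambda>q. - (Pf1 f 2 q * pd 3 E q + Pf2 f 2 2 q * E q
            + 1/2 * (Pf f q * pd 3 (pd 3 E) q + Pf1 f 2 q * pd 3 E q))", OF E_x2_y2])
     (auto intro!: has_pd_on_U_intros simp: Idx_def algebra_simps, simp_all add: field_simps)

lemma landsberg_222:
  assumes q: "q \<in> U"
  shows "pd 1 (pd 3 (pd 3 E)) q - (Gam1 f 1 2 q * pd 2 (pd 3 (pd 3 E)) q + Gam1 f 2 2 q * pd 3 (pd 3 (pd 3 E)) q)
     - (Gam2 f 1 2 2 q * pd 2 (pd 3 E) q + Gam2 f 2 2 2 q * pd 3 (pd 3 E) q)
     - (Gam2 f 1 2 2 q * pd 2 (pd 3 E) q + Gam2 f 2 2 2 q * pd 3 (pd 3 E) q) = 0"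
proof -
  have "2 \<in> Idx"
    by (simp add: Idx_def)
  then have "dX 2 (gmet E 2 2) q - (\<Sum>l\<in>Idx. Gam1 f l 2 q * dY l (gmet E 2 2) q)
      - (\<Sum>l\<in>Idx. Gam2 f l 2 2 q * gmet E l 2 q) - (\<Sum>l\<in>Idx. Gam2 f l 2 2 q * gmet E l 2 q) = 0"
    using landsberg[OF q] unfolding cond_Ls_def by blast
  then show ?thesis
    by (simp add: Idx_def gmet_def)
qed

lemma landsberg_222_reduced:
  assumes q: "q \<in> U"
  shows "2 * E q * Pf3 f 2 2 2 q + 3 * pd 3 E q * Pf2 f 2 2 q = 0"
proof -
  have sd: "q \<in> spray_domain" using q U_subset by blast
  have "Gam1 f 1 2 q = - (1/2) * (coord 2 q * Pf1 f 2 q)"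
    and "Gam1 f 2 2 q = - (1/2) * (coord 3 q * Pf1 f 2 q + Pf f q)"
    and "Gam2 f 1 2 2 q = - (1/2) * (coord 2 q * Pf2 f 2 2 q)"
    and "Gam2 f 2 2 2 q = - (1/2) * (coord 3 q * Pf2 f 2 2 q + 2 * Pf1 f 2 q)"
    by (simp_all add: Gam1_eq Gam2_eq sd Idx_def spray1_def spray2_def kdelta_def numeral_3_eq_3)
  moreover have "pd 1 (pd 3 (pd 3 E)) q = pd 3 (pd 3 (pd 1 E)) q"
    using pd_pd_E_swap_outer[OF q, of 1 3 3] pd_pd_E_swap_inner[OF q, of 1 3 3] by simp
  moreover have "pd 2 (pd 3 (pd 3 E)) q = pd 3 (pd 3 (pd 2 E)) q"
    using pd_pd_E_swap_outer[OF q, of 2 3 3] pd_pd_E_swap_inner[OF q, of 2 3 3] by simp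
  ultimately show ?thesis
    using landsberg_222[OF q] E_x2_y2y2[OF q] euler_E_y2y2[OF q] euler_E_y2[OF q] pd_E_y1y2[OF q]
    by algebra
qed

lemma landsberg_222_reduced_x:
  assumes q: "q \<in> U" and m: "m = 0 \<or> m = 1"
  shows "2 * pd m E q * Pf3 f 2 2 2 q + 3 * pd 3 (pd m E) q * Pf2 f 2 2 q = 0"
proof -
  have "2 * pd m E q * Pf3 f 2 2 2 q + 3 * pd m (pd 3 E) q * Pf2 f 2 2 q = 0"
    by (rule has_pd_vanishing_on_U[of "\<lambda>q. 2 * E q * Pf3 f 2 2 2 q + 3 * pd 3 E q * Pf2 f 2 2 q" q m, OF _ q])
       (simp add: landsberg_222_reduced, use q m in \<open>auto intro!: has_pd_on_U_intros\<close>)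
  then show ?thesis
    using pd_E_swap[OF q, of m 3] m by auto
qed

lemma E_mult_E_x_y2:
  assumes q: "q \<in> U" and m: "m = 0 \<or> m = 1" and nonzero: "Pf2 f 2 2 q \<noteq> 0"
  shows "E q * pd 3 (pd m E) q = pd 3 E q * pd m E q"
proof -
  have "Pf2 f 2 2 q * (E q * pd 3 (pd m E) q - pd 3 E q * pd m E q) = 0"
    using landsberg_222_reduced[OF q] landsberg_222_reduced_x[OF q m] by algebra
  then show ?thesis
    using nonzero by simp
qed

lemma E_x_y2_contracted:
  assumes q: "q \<in> U"
  shows "coord 2 q * pd 3 (pd 0 E) q + coord 3 q * pd 3 (pd 1 E) q
    = - (3/2 * Pf f q * pd 3 E q + Pf1 f 2 q * E q)"
proof -
  have "coord 2 q * pd 3 (pd 0 E) q + coord 3 q * pd 3 (pd 1 E) q =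
    - (pd 3 E q * (coord 2 q * Pf1 f 1 q + coord 3 q * Pf1 f 2 q)
       + E q * (coord 2 q * Pf2 f 1 2 q + coord 3 q * Pf2 f 2 2 q)
       + 1/2 * (Pf1 f 2 q * (coord 2 q * pd 2 E q + coord 3 q * pd 3 E q)
       + Pf f q * (coord 2 q * pd 3 (pd 2 E) q + coord 3 q * pd 3 (pd 3 E) q)))"
    unfolding E_x1_y2[OF q] E_x2_y2[OF q] by (simp add: algebra_simps)
  also have "\<dots> = - (pd 3 E q * Pf f q + 1/2 * (Pf1 f 2 q * (2 * E q) + Pf f q * pd 3 E q))"
    using y1_nonzero[OF q]
    by (simp add: euler_Pf euler_Pf1 euler_E[OF q] euler_E_y2[OF q])
  finally show ?thesis
    by (simp add: algebra_simps)
qed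

lemma Pf_E_y2:
  assumes q: "q \<in> U" and nonzero: "Pf2 f 2 2 q \<noteq> 0"
  shows "Pf f q * pd 3 E q = 2 * E q * Pf1 f 2 q"
proof -
  have "E q * pd 3 (pd 0 E) q = pd 3 E q * pd 0 E q" "E q * pd 3 (pd 1 E) q = pd 3 E q * pd 1 E q"
    using E_mult_E_x_y2[of q 0] E_mult_E_x_y2[of q 1] q nonzero by simp_all
  then have "E q * (coord 2 q * pd 3 (pd 0 E) q + coord 3 q * pd 3 (pd 1 E) q) =
        pd 3 E q * (coord 2 q * pd 0 E q + coord 3 q * pd 1 E q)"
    by algebra
  then have "E q * (- (3/2 * Pf f q * pd 3 E q + Pf1 f 2 q * E q)) = pd 3 E q * (- 2 * Pf f q * E q)"
    unfolding E_x_y2_contracted[OF q] E_x_contracted[OF q] .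
  then have "E q * (Pf f q * pd 3 E q - 2 * E q * Pf1 f 2 q) = 0"
    by algebra
  then show ?thesis
    using E_pos[OF q] by simp
qed

text \<open>Where \<open>P\<^sub>2\<^sub>2 \<noteq> 0\<close>, differentiating \<open>P E\<^sub>y\<^sub>2 = 2 E P\<^sub>2\<close> in \<open>y\<^sup>2\<close> and comparing with the
  \<open>x\<^sup>2\<close>-derivative of \<open>E\<close> forces \<open>P\<^sub>2\<^sub>2 E\<^sup>2 = 0\<close>.\<close>
lemma Pf2_22_vanishes:
  assumes p: "p \<in> U"
  shows "Pf2 f 2 2 p = 0"
proof (rule ccontr)
  assume nonzero: "Pf2 f 2 2 p \<noteq> 0"
  define V where "V = U \<inter> Pf2 f 2 2 -` (- {0})"
  have "continuous_on U (Pf2 f 2 2)"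
    using continuous_on_Pf2_22 U_subset continuous_on_subset by blast
  then have "open V"
    unfolding V_def by (rule continuous_open_preimage[OF _ open_U]) auto
  have "Pf f p * pd 3 (pd 3 E) p + Pf1 f 2 p * pd 3 E p - 2 * (pd 3 E p * Pf1 f 2 p + E p * Pf2 f 2 2 p) = 0"
  proof (rule has_pd_vanishing_on_open[OF \<open>open V\<close>, where k = 3])
    show "p \<in> V" using p nonzero unfolding V_def by auto
    show "Pf f q * pd 3 E q - 2 * E q * Pf1 f 2 q = 0" if "q \<in> V" for q
      using that Pf_E_y2[of q] unfolding V_def by auto
  qed (use p in \<open>auto intro!: has_pd_on_U_intros simp: Idx_def\<close>)
  moreover have "E p * pd 3 (pd 1 E) p = pd 3 E p * pd 1 E p"
    using E_mult_E_x_y2[of p 1] p nonzero by simp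
  ultimately have "Pf2 f 2 2 p * E p * E p = 0"
    using E_x2_eq[OF p] E_x2_y2[OF p] Pf_E_y2[OF p nonzero] by algebra
  then show False
    using nonzero E_pos[OF p] by simp
qed

lemma berwald_vanishes:
  assumes p: "p \<in> U" and "l \<in> Idx" "i \<in> Idx" "j \<in> Idx" "k \<in> Idx"
  shows "berwald f l i j k p = 0"
proof -
  have y1: "coord 2 p \<noteq> 0" and sd: "p \<in> spray_domain"
    using y1_nonzero[OF p] U_subset p by auto
  have d2: "deriv (deriv f) (slope p) = 0"
    using Pf2_22_vanishes[OF p] Pf2_22_eq[OF y1] y1 by simp
  have "Pf3 f 2 2 2 p = 0"
    using landsberg_222_reduced[OF p] Pf2_22_vanishes[OF p] E_pos[OF p] by simp
  then have d3: "deriv (deriv (deriv f)) (slope p) = 0"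
    using Pf3_222_eq[of f p] y1 by simp
  show ?thesis
    using berwald_eq[OF sd assms(2-5)] unfolding spray3_def Pf3_def Pf2_def d2 d3 by simp
qed

end

lemma real_analytic_imp_thrice_differentiable: "real_analytic f \<Longrightarrow> thrice_differentiable f"
  by unfold_locales (simp_all add: real_analytic_has_real_derivative real_analytic_deriv)

lemma berwald_vanishes_if_landsberg:
  assumes "thrice_differentiable f" "open U" "U \<subseteq> spray_domain" "smooth_on U E"
    and "\<forall>q\<in>U. cond_H E q \<and> cond_EL f E q \<and> cond_Ls f E q \<and> pos_def_at E q"
    and "p \<in> U" "l \<in> Idx" "i \<in> Idx" "j \<in> Idx" "k \<in> Idx"
  shows "berwald f l i j k p = 0"
proof -
  have "landsberg_metric f U E"
    using assms(1-5) by (intro landsberg_metric.intro landsberg_metric_axioms.intro) auto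
  then show ?thesis
    using assms(6-) by (rule landsberg_metric.berwald_vanishes)
qed

theorem mainTheorem14:
  fixes f :: "real \<Rightarrow> real"
  assumes "real_analytic f" and "\<exists>t. f t \<noteq> 0"
  shows "\<not> (\<exists>U E. open U \<and> U \<subseteq> spray_domain
              \<and> (\<exists>p\<in>U. \<exists>l\<in>Idx. \<exists>i\<in>Idx. \<exists>j\<in>Idx. \<exists>k\<in>Idx. berwald f l i j k p \<noteq> 0)
              \<and> smooth_on U E
              \<and> (\<forall>p\<in>U. cond_H E p \<and> cond_EL f E p \<and> cond_Ls f E p \<and> pos_def_at E p))"
  using berwald_vanishes_if_landsberg[OF real_analytic_imp_thrice_differentiable[OF assms(1)]]
  by blast

end
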